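(* Let $\mathcal{G}$ be a simple temporal clique on $n$ vertices and let $\mathcal{T}^+=(V,E^+_T)$ be obtained by the backward construction (for any choice of the arbitrary choices). Then the number of collectors is at most $n/2$.
   Context: A simple temporal clique is a pair $\mathcal{G}=(G,\lambda)$ where $G=(V,E)$ is the complete graph on a finite set $V$ of $n$ vertices and $\lambda:E\to\mathbb{N}$ assigns to each edge a single integer label such that any two distinct edges sharing an endpoint have different labels; the label of an arc $(x,y)$ is $\lambda(\{x,y\})$. For a vertex $v$, $e^+(v)$ is the edge incident to $v$ with largest label. Backward construction: let $E^+$ be the set of arcs $(v,u)$ with $\{u,v\}=e^+(v)$, except that if $e^+(u)=e^+(v)=\{u,v\}$ only one of the two arcs $(u,v),(v,u)$ is included (arbitrarily). Initialize $E^+_T:=E^+$. For every vertex $v$ of in-degree at least $2$ in $(V,E^+)$, let $(u_1,v),\dots,(u_\ell,v)$ be its in-arcs in $E^+$, where $(u_\ell,v)$ has the smallest label; for each $i<\ell$, if $u_i$ has in-degree $0$ in $(V,E^+)$, replace $(u_i,v)$ by $(v,u_i)$ in $E^+_T$, and otherwise remove $(u_i,v)$ from $E^+_T$. Set $\mathcal{T}^+=(V,E^+_T)$. A collector is a vertex of in-degree $0$ in $\mathcal{T}^+$. *)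

theory Defs
  imports Main
begin

definition cedges :: "'a set \<Rightarrow> 'a set set" where
  "cedges V = {{x, y} | x y. x \<in> V \<and> y \<in> V \<and> x \<noteq> y}"

definition simple_temporal_clique :: "'a set \<Rightarrow> ('a set \<Rightarrow> nat) \<Rightarrow> bool" where
  "simple_temporal_clique V lam \<longleftrightarrow> finite V \<and>
     (\<forall>e \<in> cedges V. \<forall>f \<in> cedges V. e \<noteq> f \<and> e \<inter> f \<noteq> {} \<longrightarrow> lam e \<noteq> lam f)"

definition eplus :: "'a set \<Rightarrow> ('a set \<Rightarrow> nat) \<Rightarrow> 'a \<Rightarrow> 'a set" where
  "eplus V lam v = (THE e. e \<in> cedges V \<and> v \<in> e \<and>
      (\<forall>f \<in> cedges V. v \<in> f \<longrightarrow> lam f \<le> lam e))"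

text \<open>Ep is a valid choice of the arc set E^+: it contains the arc (v,u) for
  every v with e^+(v) = {u,v}, except that when e^+(u) = e^+(v) = {u,v} exactly
  one of (u,v), (v,u) is included (the arbitrary choice).\<close>
definition is_Eplus :: "'a set \<Rightarrow> ('a set \<Rightarrow> nat) \<Rightarrow> ('a \<times> 'a) set \<Rightarrow> bool" where
  "is_Eplus V lam Ep \<longleftrightarrow>
     Ep \<subseteq> {(v, u). v \<in> V \<and> u \<in> V \<and> v \<noteq> u \<and> eplus V lam v = {u, v}} \<and>
     (\<forall>v \<in> V. \<forall>u \<in> V. v \<noteq> u \<and> eplus V lam v = {u, v} \<longrightarrow>
        ((v, u) \<in> Ep \<or> (u, v) \<in> Ep) \<and> \<not> ((v, u) \<in> Ep \<and> (u, v) \<in> Ep))"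

definition indeg :: "('a \<times> 'a) set \<Rightarrow> 'a \<Rightarrow> nat" where
  "indeg A v = card {u. (u, v) \<in> A}"

definition min_in_arc :: "('a set \<Rightarrow> nat) \<Rightarrow> ('a \<times> 'a) set \<Rightarrow> 'a \<Rightarrow> 'a \<Rightarrow> bool" where
  "min_in_arc lam Ep u v \<longleftrightarrow> (u, v) \<in> Ep \<and>
     (\<forall>w. (w, v) \<in> Ep \<longrightarrow> lam {u, v} \<le> lam {w, v})"

definition ET :: "('a set \<Rightarrow> nat) \<Rightarrow> ('a \<times> 'a) set \<Rightarrow> ('a \<times> 'a) set" where
  "ET lam Ep =
     {(u, v). (u, v) \<in> Ep \<and> (indeg Ep v < 2 \<or> min_in_arc lam Ep u v)}
     \<union> {(v, u). (u, v) \<in> Ep \<and> indeg Ep v \<ge> 2 \<and> \<not> min_in_arc lam Ep u v \<and> indeg Ep u = 0}"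

definition collectors :: "'a set \<Rightarrow> ('a set \<Rightarrow> nat) \<Rightarrow> ('a \<times> 'a) set \<Rightarrow> 'a set" where
  "collectors V lam Ep = {v \<in> V. indeg (ET lam Ep) v = 0}"

end

theory Submission
  imports Defs
begin

(* A collector c has no in-arc in E^+ at all: otherwise the smallest-labelled in-arc of c would
   survive in E^+_T. So the arc of E^+ along e^+(c) leaves c, and its head w is not a collector.
   This arc is not reversed, since that would give c an in-arc in E^+_T, so it survives. If two
   collectors shared the head w, then w would have in-degree at least 2 in E^+, both surviving
   arcs would have to be the smallest-labelled in-arc of w, and the two edges at w would carry
   the same label. So c \<mapsto> w injects the collectors into the non-collectors. *)

lemma finite_in_neighbours:
  assumes "finite A"
  shows "finite {u. (u, v) \<in> A}"
proof -
  have "{u. (u, v) \<in> A} \<subseteq> fst ` A" by force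
  then show ?thesis using assms finite_subset by blast
qed

lemma indeg_eq_0_iff:
  assumes "finite A"
  shows "indeg A v = 0 \<longleftrightarrow> (\<forall>u. (u, v) \<notin> A)"
  using finite_in_neighbours[OF assms] unfolding indeg_def by auto

lemma two_le_indeg:
  assumes "finite A" "(u, v) \<in> A" "(u', v) \<in> A" "u \<noteq> u'"
  shows "2 \<le> indeg A v"
proof -
  have "finite {u. (u, v) \<in> A}" using finite_in_neighbours[OF assms(1)] .
  moreover have "{u, u'} \<subseteq> {u. (u, v) \<in> A}" using assms(2,3) by blast
  ultimately have "card {u, u'} \<le> indeg A v" unfolding indeg_def by (rule card_mono)
  then show ?thesis using assms(4) by simp
qed

lemma simple_temporal_clique_label_neq:
  assumes "simple_temporal_clique V lam" "{u, w} \<in> cedges V" "{u', w} \<in> cedges V" "u \<noteq> u'"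
  shows "lam {u, w} \<noteq> lam {u', w}"
proof -
  have "{u, w} \<noteq> {u', w}" using assms(4) by (metis doubleton_eq_iff)
  moreover have "{u, w} \<inter> {u', w} \<noteq> {}" by blast
  ultimately show ?thesis using assms(1-3) unfolding simple_temporal_clique_def by metis
qed

lemma eplus_eqI:
  assumes "simple_temporal_clique V lam" "e \<in> cedges V" "v \<in> e"
    and "\<forall>f \<in> cedges V. v \<in> f \<longrightarrow> lam f \<le> lam e"
  shows "eplus V lam v = e"
  unfolding eplus_def
proof (rule the_equality)
  fix e' assume e': "e' \<in> cedges V \<and> v \<in> e' \<and> (\<forall>f \<in> cedges V. v \<in> f \<longrightarrow> lam f \<le> lam e')"
  then have "lam e' = lam e" using assms by (simp add: le_antisym)
  then show "e' = e" using e' assms unfolding simple_temporal_clique_def by blast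
qed (use assms in blast)

lemma eplus_eq_doubleton:
  assumes "simple_temporal_clique V lam" "v \<in> V" "u0 \<in> V" "u0 \<noteq> v"
  shows "\<exists>u \<in> V. u \<noteq> v \<and> eplus V lam v = {u, v}"
proof -
  define S where "S = {e \<in> cedges V. v \<in> e}"
  have "finite V" using assms(1) by (simp add: simple_temporal_clique_def)
  moreover have "S \<subseteq> Pow V" unfolding S_def cedges_def by auto
  ultimately have "finite S" by (simp add: finite_subset)
  moreover have "{u0, v} \<in> S" unfolding S_def cedges_def using assms(2-4) by blast
  ultimately have "Max (lam ` S) \<in> lam ` S" by (intro Max_in) auto
  then obtain e where e: "e \<in> S" "lam e = Max (lam ` S)" by force
  then have "\<forall>f \<in> S. lam f \<le> lam e" using \<open>finite S\<close> by simp
  then have "eplus V lam v = e" using assms(1) e(1) by (intro eplus_eqI) (auto simp: S_def)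
  moreover obtain x y where "e = {x, y}" "x \<in> V" "y \<in> V" "x \<noteq> y" "v \<in> e"
    using e(1) unfolding S_def cedges_def by blast
  ultimately show ?thesis by (metis insert_commute empty_iff insert_iff)
qed

lemma is_Eplus_arcD:
  assumes "is_Eplus V lam Ep" "(v, u) \<in> Ep"
  shows "v \<in> V" "u \<in> V" "v \<noteq> u" "{v, u} \<in> cedges V"
  using assms unfolding is_Eplus_def cedges_def by blast+

lemma is_Eplus_eplus_arc:
  assumes "is_Eplus V lam Ep" "v \<in> V" "u \<in> V" "v \<noteq> u" "eplus V lam v = {u, v}"
  shows "(v, u) \<in> Ep \<or> (u, v) \<in> Ep"
  using assms unfolding is_Eplus_def by blast

lemma is_Eplus_finite:
  assumes "finite V" "is_Eplus V lam Ep"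
  shows "finite Ep"
proof -
  have "Ep \<subseteq> V \<times> V" using is_Eplus_arcD[OF assms(2)] by auto
  then show ?thesis using assms(1) finite_subset by blast
qed

lemma ET_subset: "ET lam Ep \<subseteq> Ep \<union> converse Ep"
  unfolding ET_def by auto

lemma min_in_arc_exists:
  assumes "(u, v) \<in> Ep"
  shows "\<exists>w. min_in_arc lam Ep w v"
  using ex_has_least_nat[of "\<lambda>w. (w, v) \<in> Ep" u "\<lambda>w. lam {w, v}"] assms
  unfolding min_in_arc_def by blast

lemma min_in_arc_in_ET:
  assumes "min_in_arc lam Ep w v"
  shows "(w, v) \<in> ET lam Ep"
  using assms unfolding ET_def min_in_arc_def by auto

lemma min_in_arc_unique:
  assumes "simple_temporal_clique V lam" "is_Eplus V lam Ep"
    and "min_in_arc lam Ep u v" "min_in_arc lam Ep u' v"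
  shows "u = u'"
proof (rule ccontr)
  assume "u \<noteq> u'"
  have arcs: "(u, v) \<in> Ep" "(u', v) \<in> Ep" using assms(3,4) unfolding min_in_arc_def by blast+
  then have "lam {u, v} = lam {u', v}"
    using assms(3,4) unfolding min_in_arc_def by (meson le_antisym)
  moreover have "{u, v} \<in> cedges V" "{u', v} \<in> cedges V"
    using is_Eplus_arcD(4)[OF assms(2)] arcs by blast+
  ultimately show False using simple_temporal_clique_label_neq[OF assms(1)] \<open>u \<noteq> u'\<close> by blast
qed

lemma no_in_arc_if_no_ET_in_arc:
  assumes "\<forall>u. (u, v) \<notin> ET lam Ep"
  shows "(u, v) \<notin> Ep"
  using assms min_in_arc_exists min_in_arc_in_ET by metis

lemma out_arc_of_source_in_ET:
  assumes "(c, w) \<in> Ep" "indeg Ep c = 0" "\<forall>u. (u, c) \<notin> ET lam Ep"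
  shows "(c, w) \<in> ET lam Ep"
proof (rule ccontr)
  assume "(c, w) \<notin> ET lam Ep"
  then have "2 \<le> indeg Ep w" "\<not> min_in_arc lam Ep c w" using assms(1) unfolding ET_def by auto
  then have "(w, c) \<in> ET lam Ep" using assms(1,2) unfolding ET_def by blast
  then show False using assms(3) by blast
qed

lemma ET_arc_min_in_arc:
  assumes "(c, w) \<in> ET lam Ep" "(w, c) \<notin> Ep" "2 \<le> indeg Ep w"
  shows "min_in_arc lam Ep c w"
  using assms unfolding ET_def by auto

lemma card_le_half_if_inj_into_complement:
  assumes "finite V" "C \<subseteq> V" "inj_on f C" "f ` C \<subseteq> V - C"
  shows "2 * card C \<le> card V"
proof -
  have "card C \<le> card (V - C)" using card_inj_on_le[OF assms(3,4)] assms(1) by simp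
  moreover have "card (V - C) = card V - card C" using assms(1,2) by (simp add: card_Diff_subset finite_subset)
  moreover have "card C \<le> card V" using assms(1,2) card_mono by blast
  ultimately show ?thesis by linarith
qed

context
  fixes V :: "'a set" and lam :: "'a set \<Rightarrow> nat" and Ep :: "('a \<times> 'a) set"
  assumes stc: "simple_temporal_clique V lam" and Eplus: "is_Eplus V lam Ep"
begin

lemma finite_Ep: "finite Ep"
  using is_Eplus_finite[OF _ Eplus] stc by (simp add: simple_temporal_clique_def)

lemma collector_no_ET_in_arc:
  assumes "c \<in> collectors V lam Ep"
  shows "(u, c) \<notin> ET lam Ep"
proof -
  have "finite (ET lam Ep)" by (rule finite_subset[OF ET_subset]) (simp add: finite_Ep)
  moreover have "indeg (ET lam Ep) c = 0" using assms unfolding collectors_def by simp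
  ultimately show ?thesis using indeg_eq_0_iff[of "ET lam Ep" c] by simp
qed

lemma collector_no_in_arc:
  assumes "c \<in> collectors V lam Ep"
  shows "(u, c) \<notin> Ep"
  using no_in_arc_if_no_ET_in_arc collector_no_ET_in_arc[OF assms] by metis

lemma collector_out_arc:
  assumes "c \<in> collectors V lam Ep" "2 \<le> card V"
  shows "\<exists>w. (c, w) \<in> Ep"
proof -
  have "c \<in> V" using assms(1) unfolding collectors_def by blast
  moreover have "\<exists>u0 \<in> V. u0 \<noteq> c"
  proof (rule ccontr)
    assume "\<not> ?thesis"
    then have "V \<subseteq> {c}" by auto
    then have "card V \<le> 1" using card_mono[of "{c}" V] by simp
    then show False using assms(2) by simp
  qed
  ultimately obtain u where "u \<in> V" "u \<noteq> c" "eplus V lam c = {u, c}"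
    using eplus_eq_doubleton[OF stc] by blast
  then have "(c, u) \<in> Ep \<or> (u, c) \<in> Ep" using is_Eplus_eplus_arc[OF Eplus \<open>c \<in> V\<close>] by blast
  then show ?thesis using collector_no_in_arc[OF assms(1)] by blast
qed

lemma collector_out_arc_in_ET:
  assumes "c \<in> collectors V lam Ep" "(c, w) \<in> Ep"
  shows "(c, w) \<in> ET lam Ep"
proof -
  have "indeg Ep c = 0" using collector_no_in_arc[OF assms(1)] indeg_eq_0_iff[OF finite_Ep] by simp
  then show ?thesis
    using out_arc_of_source_in_ET[OF assms(2)] collector_no_ET_in_arc[OF assms(1)] by simp
qed

lemma collectors_share_no_out_neighbour:
  assumes "c \<in> collectors V lam Ep" "c' \<in> collectors V lam Ep" "(c, w) \<in> Ep" "(c', w) \<in> Ep"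
  shows "c = c'"
proof (rule ccontr)
  assume "c \<noteq> c'"
  then have "2 \<le> indeg Ep w" using two_le_indeg[OF finite_Ep assms(3,4)] by simp
  then have "min_in_arc lam Ep c w" "min_in_arc lam Ep c' w"
    using ET_arc_min_in_arc collector_out_arc_in_ET collector_no_in_arc assms by metis+
  then show False using min_in_arc_unique[OF stc Eplus] \<open>c \<noteq> c'\<close> by blast
qed

end

theorem lemma5:
  fixes V :: "'a set" and lam :: "'a set \<Rightarrow> nat" and Ep :: "('a \<times> 'a) set"
  assumes "simple_temporal_clique V lam"
    and "card V \<ge> 2"
    and "is_Eplus V lam Ep"
  shows "2 * card (collectors V lam Ep) \<le> card V"
proof -
  define C where "C = collectors V lam Ep"
  define f where "f c = (SOME w. (c, w) \<in> Ep)" for c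
  have f_arc: "(c, f c) \<in> Ep" if "c \<in> C" for c
    unfolding f_def using collector_out_arc[OF assms(1,3)] that assms(2) C_def by (metis someI_ex)
  have "inj_on f C"
    using collectors_share_no_out_neighbour[OF assms(1,3)] f_arc C_def by (metis inj_onI)
  moreover have "f ` C \<subseteq> V - C"
    using f_arc is_Eplus_arcD(2)[OF assms(3)] collector_no_in_arc[OF assms(1,3)] C_def by blast
  moreover have "finite V" "C \<subseteq> V"
    using assms(1) unfolding simple_temporal_clique_def C_def collectors_def by auto
  ultimately show ?thesis using card_le_half_if_inj_into_complement C_def by blast
qed

end
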